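(* For every $v\in\mathbb{R}$, the sets $\{\eta\in\mathcal{L}:c_\pi(\eta)\le v\}$ and $\{\eta\in\mathcal{L}:c_\pi(\eta)\ge v\}$ are compact in the topology of weak convergence.
   Context: $\pi\in(0,1)$, $\epsilon>0$, $B>0$. $\mathcal{L}=\{\eta\in\mathcal{P}(\mathbb{R}):\mathbb{E}_\eta|X|^{1+\epsilon}\le B\}$. $F_\eta(x)=\eta((-\infty,x])$, $x_\pi(\eta)=\min\{z:F_\eta(z)\ge\pi\}$, $c_\pi(\eta)=\frac{F_\eta(x_\pi(\eta))-\pi}{1-\pi}x_\pi(\eta)+\frac{1}{1-\pi}\int_{(x_\pi(\eta),\infty)}y\,dF_\eta(y)$. *)

theory Defs
  imports "HOL-Probability.Probability"
begin

definition momL :: "real \<Rightarrow> real \<Rightarrow> real measure set" where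
  "momL eps B = {\<eta>. real_distribution \<eta> \<and>
      (\<integral>\<^sup>+ x. ennreal (\<bar>x\<bar> powr (1 + eps)) \<partial>\<eta>) \<le> ennreal B}"

definition Fdist :: "real measure \<Rightarrow> real \<Rightarrow> real" where
  "Fdist \<eta> x = measure \<eta> {..x}"

definition xq :: "real \<Rightarrow> real measure \<Rightarrow> real" where
  "xq p \<eta> = (LEAST z. Fdist \<eta> z \<ge> p)"

definition cvar :: "real \<Rightarrow> real measure \<Rightarrow> real" where
  "cvar p \<eta> = (Fdist \<eta> (xq p \<eta>) - p) / (1 - p) * xq p \<eta>
      + 1 / (1 - p) * (LINT y : {xq p \<eta><..} | \<eta>. y)"

definition weakconv_topology :: "real measure topology" where
  "weakconv_topology = subtopology
     (topology_generated_by
        {{\<eta>. (\<integral>x. f x \<partial>\<eta>) \<in> U} | f U. continuous_on UNIV (f :: real \<Rightarrow> real) \<and> bounded (range f) \<and> open U})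
     {\<eta>. real_distribution \<eta>}"

end

theory Submission
  imports Defs "HOL-Real_Asymp.Real_Asymp"
begin

(*
  The weak topology on Borel probability measures on the reals is metrizable: integrating against
  the countably many continuous steps cts_step q r with rational q < r embeds it homeomorphically
  into a product of countably many real lines, because convergence of these integrals already
  forces convergence of the distribution functions at their continuity points. Hence compactness
  is sequential compactness.

  The (1 + eps)-moment bound makes L tight (Markov's inequality), so by Helly's selection theorem
  every sequence in L has a weakly convergent subsequence; its limit stays in L by Skorohod's
  representation and Fatou's lemma.

  CVaR is the Rockafellar-Uryasev minimum c_pi(eta) = min_z z + E (X - z)^+ / (1 - pi), attained at
  the quantile x_pi(eta). Along weakly convergent sequences in L the integrals E (X - z)^+ converge,
  since the moment bound controls the truncation error uniformly. Evaluating the objective at the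
  quantile of the limit gives upper semicontinuity of c_pi on L. For lower semicontinuity, the
  quantiles of measures in L are uniformly bounded, so along a subsequence they converge, and the
  objective is Lipschitz in z. Thus {c_pi <= v} and {c_pi >= v} are closed under weak limits in L.
*)

section \<open>Metrizability of the weak topology\<close>

fun rat_step :: "rat \<times> rat \<Rightarrow> real \<Rightarrow> real" where
  "rat_step (q, r) = (if q < r then cts_step (of_rat q) (of_rat r) else (\<lambda>_. 0))"

lemma isCont_rat_step: "isCont (rat_step qr) x"
proof (cases qr)
  case (Pair q r)
  have "isCont (cts_step a b) x" if "a < b" for a b
    using uniformly_continuous_imp_continuous[OF cts_step_uniformly_continuous[OF that]]
    by (simp add: continuous_on_eq_continuous_at)
  then show ?thesis
    using Pair by (simp add: of_rat_less)
qed

lemma abs_rat_step_le: "\<bar>rat_step qr x\<bar> \<le> 1"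
  by (cases qr) (auto simp: cts_step_def divide_simps)

lemma rat_step_borel_measurable [measurable]: "rat_step qr \<in> borel_measurable borel"
  by (intro borel_measurable_continuous_onI continuous_at_imp_continuous_on ballI isCont_rat_step)

definition step_integrals :: "real measure \<Rightarrow> rat \<times> rat \<Rightarrow> real" where
  "step_integrals M qr = (\<integral>t. rat_step qr t \<partial>M)"

lemma step_integral_between_cdf:
  fixes x y :: real
  assumes "x < y"
  obtains qr where
    "\<And>M. real_distribution M \<Longrightarrow> cdf M x \<le> step_integrals M qr"
    "\<And>M. real_distribution M \<Longrightarrow> step_integrals M qr \<le> cdf M y"
proof -
  obtain q where q: "x < of_rat q" "of_rat q < y"
    using of_rat_dense[OF assms] by blast
  obtain r where r: "of_rat q < (of_rat r :: real)" "of_rat r < y"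
    using of_rat_dense[OF q(2)] by blast
  have step: "rat_step (q, r) = cts_step (of_rat q) (of_rat r)"
    using r(1) by (simp add: of_rat_less)
  show ?thesis
  proof (rule that[of "(q, r)"])
    fix M assume "real_distribution M"
    then interpret real_distribution M .
    show "cdf M x \<le> step_integrals M (q, r)"
      using cdf_nondecreasing[of x "of_rat q"] cdf_cts_step(1)[OF r(1)] q(1)
      unfolding step_integrals_def step by linarith
    show "step_integrals M (q, r) \<le> cdf M y"
      using cdf_nondecreasing[of "of_rat r" y] cdf_cts_step(2)[OF r(1)] r(2)
      unfolding step_integrals_def step by linarith
  qed
qed

context
  fixes M_seq :: "nat \<Rightarrow> real measure" and M :: "real measure"
  assumes distr_M_seq: "\<And>n. real_distribution (M_seq n)" and distr_M: "real_distribution M"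
    and step_conv: "\<And>qr. (\<lambda>n. step_integrals (M_seq n) qr) \<longlonglongrightarrow> step_integrals M qr"
begin

lemma limsup_cdf_le_of_step_conv:
  assumes "x < y"
  shows "limsup (\<lambda>n. cdf (M_seq n) x) \<le> cdf M y"
proof -
  obtain qr where le: "\<And>N. real_distribution N \<Longrightarrow> cdf N x \<le> step_integrals N qr"
    and ge: "\<And>N. real_distribution N \<Longrightarrow> step_integrals N qr \<le> cdf N y"
    using step_integral_between_cdf[OF assms] by blast
  have "limsup (\<lambda>n. cdf (M_seq n) x) \<le> limsup (\<lambda>n. step_integrals (M_seq n) qr)"
    by (intro Limsup_mono always_eventually) (simp add: le distr_M_seq)
  also have "\<dots> = step_integrals M qr"
    by (intro lim_imp_Limsup) (simp_all add: step_conv)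
  finally show ?thesis
    using ge[OF distr_M] by (simp add: order_trans)
qed

lemma cdf_le_liminf_of_step_conv:
  assumes "y < x"
  shows "cdf M y \<le> liminf (\<lambda>n. cdf (M_seq n) x)"
proof -
  obtain qr where le: "\<And>N. real_distribution N \<Longrightarrow> cdf N y \<le> step_integrals N qr"
    and ge: "\<And>N. real_distribution N \<Longrightarrow> step_integrals N qr \<le> cdf N x"
    using step_integral_between_cdf[OF assms] by blast
  have "cdf M y \<le> ereal (step_integrals M qr)"
    using le[OF distr_M] by simp
  also have "\<dots> = liminf (\<lambda>n. step_integrals (M_seq n) qr)"
    by (intro lim_imp_Liminf[symmetric]) (simp_all add: step_conv)
  also have "\<dots> \<le> liminf (\<lambda>n. cdf (M_seq n) x)"
    by (intro Liminf_mono always_eventually) (simp add: ge distr_M_seq)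
  finally show ?thesis .
qed

lemma step_conv_imp_weak_conv_m: "weak_conv_m M_seq M"
  unfolding weak_conv_m_def weak_conv_def
proof (intro allI impI)
  interpret real_distribution M by (rule distr_M)
  fix x assume "isCont (cdf M) x"
  then have left_cont: "continuous (at_left x) (cdf M)"
    by (simp add: continuous_at_split)
  have "limsup (\<lambda>n. cdf (M_seq n) x) \<le> cdf M x"
  proof (rule tendsto_lowerbound)
    show "((\<lambda>y. ereal (cdf M y)) \<longlongrightarrow> ereal (cdf M x)) (at_right x)"
      using cdf_is_right_cont[of x] by (simp add: continuous_within)
    show "\<forall>\<^sub>F y in at_right x. limsup (\<lambda>n. ereal (cdf (M_seq n) x)) \<le> ereal (cdf M y)"
      by (rule eventually_mono[OF eventually_at_right_less limsup_cdf_le_of_step_conv])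
  qed simp
  moreover have "cdf M x \<le> liminf (\<lambda>n. cdf (M_seq n) x)"
  proof (rule tendsto_upperbound)
    show "((\<lambda>y. ereal (cdf M y)) \<longlongrightarrow> ereal (cdf M x)) (at_left x)"
      using left_cont by (simp add: continuous_within)
    show "\<forall>\<^sub>F y in at_left x. ereal (cdf M y) \<le> liminf (\<lambda>n. ereal (cdf (M_seq n) x))"
      by (rule eventually_mono[OF eventually_at_left_real[of "x - 1" x]])
         (auto intro: cdf_le_liminf_of_step_conv)
  qed simp
  ultimately show "(\<lambda>n. cdf (M_seq n) x) \<longlonglongrightarrow> cdf M x"
    by (rule limsup_le_liminf_real)
qed

end

lemma weak_conv_m_iff_step_integrals:
  assumes "\<And>n. real_distribution (M_seq n)" "real_distribution M"
  shows "weak_conv_m M_seq M \<longleftrightarrow>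
    (\<forall>qr. (\<lambda>n. step_integrals (M_seq n) qr) \<longlonglongrightarrow> step_integrals M qr)"
proof
  assume "weak_conv_m M_seq M"
  then show "\<forall>qr. (\<lambda>n. step_integrals (M_seq n) qr) \<longlonglongrightarrow> step_integrals M qr"
    unfolding step_integrals_def
    by (intro allI weak_conv_imp_integral_bdd_continuous_conv[OF assms, where B = 1])
       (simp_all add: isCont_rat_step abs_rat_step_le)
qed (use assms step_conv_imp_weak_conv_m in blast)

lemma inj_on_step_integrals: "inj_on step_integrals {M. real_distribution M}"
proof -
  have cdf_le: "cdf M x \<le> cdf N x"
    if M: "real_distribution M" and N: "real_distribution N"
      and eq: "step_integrals M = step_integrals N" for M N x
  proof -
    interpret N: real_distribution N by (rule N)
    have "cdf M x \<le> cdf N y" if "x < y" for y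
    proof -
      obtain qr where "cdf M x \<le> step_integrals M qr" "step_integrals N qr \<le> cdf N y"
        using step_integral_between_cdf[OF \<open>x < y\<close>] M N by metis
      then show ?thesis
        using eq by simp
    qed
    then show ?thesis
      using N.cdf_is_right_cont[of x]
      by (intro tendsto_lowerbound[of "cdf N" "cdf N x" "at_right x"])
         (auto simp: continuous_within intro: eventually_mono[OF eventually_at_right_less])
  qed
  show ?thesis
  proof (rule inj_onI)
    fix M N assume "M \<in> {M. real_distribution M}" "N \<in> {M. real_distribution M}"
      and "step_integrals M = step_integrals N"
    then show "M = N"
      using cdf_le cdf_unique by (metis antisym ext mem_Collect_eq)
  qed
qed

definition weak_subbasis :: "real measure set set" where
  "weak_subbasis = {{\<eta>. (\<integral>x. f x \<partial>\<eta>) \<in> U} | f U.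
     continuous_on UNIV (f :: real \<Rightarrow> real) \<and> bounded (range f) \<and> open U}"

lemma weakconv_topology_eq:
  "weakconv_topology = subtopology (topology_generated_by weak_subbasis) {M. real_distribution M}"
  unfolding weakconv_topology_def weak_subbasis_def ..

lemma weak_subbasisI:
  fixes f :: "real \<Rightarrow> real"
  assumes "continuous_on UNIV f" "bounded (range f)" "open U"
  shows "{\<eta>. (\<integral>x. f x \<partial>\<eta>) \<in> U} \<in> weak_subbasis"
  unfolding weak_subbasis_def using assms by (intro CollectI exI[of _ f] exI[of _ U]) simp

lemma weak_subbasisE:
  assumes "V \<in> weak_subbasis"
  obtains f :: "real \<Rightarrow> real" and U where "V = {\<eta>. (\<integral>x. f x \<partial>\<eta>) \<in> U}"
    and "continuous_on UNIV f" "bounded (range f)" "open U"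
  using assms unfolding weak_subbasis_def by blast

lemma UNIV_in_weak_subbasis: "UNIV \<in> weak_subbasis"
  using weak_subbasisI[of "\<lambda>_. 0" UNIV] by simp

lemma topspace_weakconv_topology: "topspace weakconv_topology = {M. real_distribution M}"
  using UNIV_in_weak_subbasis by (auto simp: weakconv_topology_eq)

lemma limitin_topology_generated_byI:
  assumes "l \<in> \<Union>S" and "\<And>U. U \<in> S \<Longrightarrow> l \<in> U \<Longrightarrow> eventually (\<lambda>x. f x \<in> U) F"
  shows "limitin (topology_generated_by S) f l F"
  unfolding limitin_def openin_topology_generated_by_iff
proof (intro conjI allI impI)
  show "l \<in> topspace (topology_generated_by S)"
    using assms(1) by simp
  fix U assume "generate_topology_on S U \<and> l \<in> U"
  then have "generate_topology_on S U" "l \<in> U" by auto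
  then show "eventually (\<lambda>x. f x \<in> U) F"
  proof (induction rule: generate_topology_on.induct)
    case (Int a b)
    then show ?case by (auto intro: eventually_conj elim: eventually_mono)
  next
    case (UN K)
    then obtain k where "k \<in> K" "l \<in> k" "eventually (\<lambda>x. f x \<in> k) F" by blast
    then show ?case by (auto elim: eventually_mono)
  qed (use assms(2) in auto)
qed

lemma limitin_weakconv_topologyI:
  assumes "real_distribution M" "\<forall>\<^sub>F n in F. real_distribution (M_seq n)"
    and "\<And>f :: real \<Rightarrow> real. continuous_on UNIV f \<Longrightarrow> bounded (range f) \<Longrightarrow>
      ((\<lambda>n. \<integral>x. f x \<partial>M_seq n) \<longlongrightarrow> (\<integral>x. f x \<partial>M)) F"
  shows "limitin weakconv_topology M_seq M F"
  unfolding weakconv_topology_eq limitin_subtopology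
proof (intro conjI limitin_topology_generated_byI)
  show "M \<in> \<Union>weak_subbasis"
    using UNIV_in_weak_subbasis by blast
  fix V assume "V \<in> weak_subbasis" "M \<in> V"
  then obtain f :: "real \<Rightarrow> real" and U where V: "V = {\<eta>. (\<integral>x. f x \<partial>\<eta>) \<in> U}"
    and f: "continuous_on UNIV f" "bounded (range f)" and "open U" "(\<integral>x. f x \<partial>M) \<in> U"
    by (auto elim: weak_subbasisE)
  then show "eventually (\<lambda>n. M_seq n \<in> V) F"
    using topological_tendstoD[OF assms(3)[OF f]] by simp
qed (use assms in simp_all)

lemma weak_conv_imp_limitin_weakconv_topology:
  assumes "\<And>n. real_distribution (M_seq n)" "real_distribution M" "weak_conv_m M_seq M"
  shows "limitin weakconv_topology M_seq M sequentially"
proof (rule limitin_weakconv_topologyI)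
  fix f :: "real \<Rightarrow> real" assume "continuous_on UNIV f" "bounded (range f)"
  then obtain C where "\<And>x. norm (f x) \<le> C"
    unfolding bounded_iff by blast
  with \<open>continuous_on UNIV f\<close> show "(\<lambda>n. \<integral>x. f x \<partial>M_seq n) \<longlonglongrightarrow> (\<integral>x. f x \<partial>M)"
    by (intro weak_conv_imp_integral_bdd_continuous_conv[OF assms])
       (simp_all add: continuous_on_eq_continuous_at)
qed (use assms in simp_all)

lemma continuous_map_weakconv_topology_integral:
  fixes f :: "real \<Rightarrow> real"
  assumes "continuous_on UNIV f" "bounded (range f)"
  shows "continuous_map weakconv_topology euclideanreal (\<lambda>M. \<integral>x. f x \<partial>M)"
  unfolding continuous_map_def
proof (intro conjI allI impI)
  fix U :: "real set" assume "openin euclideanreal U"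
  then have "openin weakconv_topology ({M. real_distribution M} \<inter> {M. (\<integral>x. f x \<partial>M) \<in> U})"
    unfolding weakconv_topology_eq using assms
    by (intro openin_subtopology_Int2 topology_generated_by_Basis weak_subbasisI) simp_all
  then show "openin weakconv_topology {M \<in> topspace weakconv_topology. (\<integral>x. f x \<partial>M) \<in> U}"
    by (simp add: topspace_weakconv_topology Collect_conj_eq)
qed simp

definition step_topology :: "(rat \<times> rat \<Rightarrow> real) topology" where
  "step_topology = subtopology (powertop_real UNIV) (step_integrals ` {M. real_distribution M})"

lemma metrizable_space_step_topology: "metrizable_space step_topology"
  unfolding step_topology_def
  by (intro metrizable_space_subtopology)
     (simp add: metrizable_space_product_topology metrizable_space_euclidean)

lemma limitin_step_topology_iff_weak_conv_m:
  assumes "\<And>n. real_distribution (M_seq n)" "real_distribution M"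
  shows "limitin step_topology (\<lambda>n. step_integrals (M_seq n)) (step_integrals M) sequentially
    \<longleftrightarrow> weak_conv_m M_seq M"
  using assms
  by (simp add: step_topology_def limitin_subtopology limitin_componentwise
      weak_conv_m_iff_step_integrals)

lemma continuous_map_step_integrals: "continuous_map weakconv_topology step_topology step_integrals"
proof -
  have "continuous_map weakconv_topology euclideanreal (\<lambda>M. step_integrals M qr)" for qr
    unfolding step_integrals_def
  proof (rule continuous_map_weakconv_topology_integral)
    show "continuous_on UNIV (rat_step qr)"
      by (simp add: continuous_at_imp_continuous_on isCont_rat_step)
    show "bounded (range (rat_step qr))"
      using abs_rat_step_le unfolding bounded_iff by (metis real_norm_def rangeE)
  qed
  then show ?thesis
    by (simp add: step_topology_def continuous_map_into_subtopology
        continuous_map_componentwise_UNIV topspace_weakconv_topology)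
qed

lemma closed_map_step_integrals: "closed_map weakconv_topology step_topology step_integrals"
  unfolding closed_map_def
proof (intro allI impI)
  fix C assume C: "closedin weakconv_topology C"
  then have C_distr: "C \<subseteq> {M. real_distribution M}"
    using closedin_subset topspace_weakconv_topology by blast
  obtain X d where "Metric_space X d" and top: "step_topology = Metric_space.mtopology X d"
    using metrizable_space_step_topology metrizable_space_def by blast
  interpret Metric_space X d by fact
  have X: "X = step_integrals ` {M. real_distribution M}"
    using arg_cong[OF top, of topspace] by (simp add: step_topology_def)
  show "closedin step_topology (step_integrals ` C)"
    unfolding top metric_closedin_iff_sequentially_closed
  proof (intro conjI allI impI)
    show "step_integrals ` C \<subseteq> X"
      using C_distr X by auto
    fix \<sigma> l assume \<sigma>: "range \<sigma> \<subseteq> step_integrals ` C \<and> limitin mtopology \<sigma> l sequentially"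
    then have "l \<in> X"
      using limitin_topspace[of mtopology \<sigma> l sequentially] by simp
    then obtain M where M: "real_distribution M" "l = step_integrals M"
      using X by auto
    have "\<forall>n. \<exists>N. N \<in> C \<and> \<sigma> n = step_integrals N"
      using \<sigma> by blast
    then obtain c where c: "\<And>n. c n \<in> C" and \<sigma>_eq: "\<sigma> = (\<lambda>n. step_integrals (c n))"
      by metis
    have "limitin step_topology (\<lambda>n. step_integrals (c n)) (step_integrals M) sequentially"
      using \<sigma> unfolding top \<sigma>_eq M(2) by simp
    then have "weak_conv_m c M"
      using C_distr c M by (subst (asm) limitin_step_topology_iff_weak_conv_m) auto
    then have "limitin weakconv_topology c M sequentially"
      using C_distr c M by (intro weak_conv_imp_limitin_weakconv_topology) auto
    then have "M \<in> C"
      using C c by (intro limitin_closedin) auto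
    then show "l \<in> step_integrals ` C"
      using M(2) by simp
  qed
qed

lemma homeomorphic_map_step_integrals:
  "homeomorphic_map weakconv_topology step_topology step_integrals"
  by (intro bijective_closed_imp_homeomorphic_map continuous_map_step_integrals
      closed_map_step_integrals)
     (simp_all add: topspace_weakconv_topology step_topology_def inj_on_step_integrals)

lemma metrizable_space_weakconv_topology: "metrizable_space weakconv_topology"
proof -
  have "weakconv_topology homeomorphic_space step_topology"
    using homeomorphic_map_step_integrals unfolding homeomorphic_space by blast
  then show ?thesis
    using homeomorphic_metrizable_space metrizable_space_step_topology by blast
qed

lemma compactin_weakconv_topology_sequentially:
  assumes "S \<subseteq> {M. real_distribution M}"
    and "\<And>\<sigma> :: nat \<Rightarrow> real measure. (\<And>n. \<sigma> n \<in> S) \<Longrightarrow>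
      \<exists>M r. M \<in> S \<and> strict_mono r \<and> weak_conv_m (\<sigma> \<circ> r) M"
  shows "compactin weakconv_topology S"
proof -
  obtain X d where "Metric_space X d" and top: "weakconv_topology = Metric_space.mtopology X d"
    using metrizable_space_weakconv_topology metrizable_space_def by blast
  interpret Metric_space X d by fact
  have X: "X = {M. real_distribution M}"
    using arg_cong[OF top, of topspace] by (simp add: topspace_weakconv_topology)
  show ?thesis
    unfolding top compactin_sequentially
  proof (intro conjI allI impI)
    show "S \<subseteq> X"
      using assms(1) X by simp
    fix \<sigma> :: "nat \<Rightarrow> real measure" assume "range \<sigma> \<subseteq> S"
    then have \<sigma>: "\<And>n. \<sigma> n \<in> S"
      by blast
    then obtain M r where "M \<in> S" "strict_mono r" "weak_conv_m (\<sigma> \<circ> r) M"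
      using assms(2)[of \<sigma>] by blast
    moreover have "limitin mtopology (\<sigma> \<circ> r) M sequentially"
      unfolding top[symmetric]
    proof (rule weak_conv_imp_limitin_weakconv_topology)
      show "real_distribution ((\<sigma> \<circ> r) n)" for n
        using \<sigma>[of "r n"] assms(1) by auto
      show "real_distribution M"
        using \<open>M \<in> S\<close> assms(1) by auto
    qed fact
    ultimately show "\<exists>l r. l \<in> S \<and> strict_mono r \<and> limitin mtopology (\<sigma> \<circ> r) l sequentially"
      by blast
  qed
qed

section \<open>The moment class\<close>

lemma momL_memD:
  assumes "\<eta> \<in> momL eps B"
  shows "real_distribution \<eta>" and "integrable \<eta> (\<lambda>x. \<bar>x\<bar> powr (1 + eps))"
proof -
  show "real_distribution \<eta>"
    using assms unfolding momL_def by simp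
  then interpret real_distribution \<eta> .
  show "integrable \<eta> (\<lambda>x. \<bar>x\<bar> powr (1 + eps))"
    using assms unfolding momL_def
    by (intro integrableI_nonneg) (auto simp: top_unique le_less_trans[OF _ ennreal_less_top])
qed

lemma momL_moment_le:
  assumes "\<eta> \<in> momL eps B" "0 \<le> B"
  shows "(\<integral>x. \<bar>x\<bar> powr (1 + eps) \<partial>\<eta>) \<le> B"
proof -
  interpret real_distribution \<eta>
    using momL_memD(1)[OF assms(1)] .
  have "ennreal (\<integral>x. \<bar>x\<bar> powr (1 + eps) \<partial>\<eta>) = (\<integral>\<^sup>+ x. ennreal (\<bar>x\<bar> powr (1 + eps)) \<partial>\<eta>)"
    using momL_memD(2)[OF assms(1)] by (intro nn_integral_eq_integral[symmetric]) auto
  also have "\<dots> \<le> ennreal B"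
    using assms(1) unfolding momL_def by simp
  finally show ?thesis
    using assms(2) by simp
qed

lemma abs_le_one_plus_abs_powr:
  fixes x eps :: real
  assumes "0 \<le> eps"
  shows "\<bar>x\<bar> \<le> 1 + \<bar>x\<bar> powr (1 + eps)"
proof (cases "\<bar>x\<bar> \<le> 1")
  case False
  then have "\<bar>x\<bar> powr 1 \<le> \<bar>x\<bar> powr (1 + eps)"
    using assms by (intro powr_mono) auto
  then show ?thesis
    by simp
qed (simp add: add_increasing2)

lemma momL_integrable_id:
  assumes "\<eta> \<in> momL eps B" "0 \<le> eps"
  shows "integrable \<eta> (\<lambda>x. x)"
proof -
  interpret real_distribution \<eta>
    using momL_memD(1)[OF assms(1)] .
  have "integrable \<eta> (\<lambda>x. 1 + \<bar>x\<bar> powr (1 + eps))"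
    using momL_memD(2)[OF assms(1)] by simp
  then show ?thesis
    by (rule Bochner_Integration.integrable_bound)
       (simp_all add: abs_le_one_plus_abs_powr[OF assms(2)])
qed

lemma momL_measure_abs_ge_le:
  assumes "\<eta> \<in> momL eps B" "0 \<le> B" "0 \<le> eps" "0 < R"
  shows "measure \<eta> {x. R \<le> \<bar>x\<bar>} \<le> B / R powr (1 + eps)"
proof -
  interpret real_distribution \<eta>
    using momL_memD(1)[OF assms(1)] .
  have "measure \<eta> {x. R \<le> \<bar>x\<bar>} * R powr (1 + eps)
      = (\<integral>x. indicator {x. R \<le> \<bar>x\<bar>} x * R powr (1 + eps) \<partial>\<eta>)"
    by simp
  also have "\<dots> \<le> (\<integral>x. \<bar>x\<bar> powr (1 + eps) \<partial>\<eta>)"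
  proof (rule integral_mono[OF _ momL_memD(2)[OF assms(1)]])
    show "integrable \<eta> (\<lambda>x. indicator {x. R \<le> \<bar>x\<bar>} x * R powr (1 + eps))"
      by (rule integrable_const_bound[where B = "R powr (1 + eps)"]) (auto simp: indicator_def)
    show "indicator {x. R \<le> \<bar>x\<bar>} x * R powr (1 + eps) \<le> \<bar>x\<bar> powr (1 + eps)" for x
      using assms(3,4) by (auto simp: indicator_def intro!: powr_mono2)
  qed
  also have "\<dots> \<le> B"
    using momL_moment_le[OF assms(1,2)] .
  finally show ?thesis
    using assms(4) by (simp add: field_simps)
qed

lemma momL_uniform_tail:
  assumes "0 \<le> B" "0 \<le> eps" "0 < e"
  obtains R where "0 < R" "\<And>\<eta>. \<eta> \<in> momL eps B \<Longrightarrow> measure \<eta> {x. R \<le> \<bar>x\<bar>} < e"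
proof -
  have "((\<lambda>R. B / R powr (1 + eps)) \<longlongrightarrow> 0) at_top"
    using assms(2) by real_asymp
  then have "\<forall>\<^sub>F R in at_top. B / R powr (1 + eps) < e \<and> 0 < R"
    using assms(3) by (intro eventually_conj order_tendstoD(2) eventually_gt_at_top)
  then obtain R where "B / R powr (1 + eps) < e" "0 < R"
    by (auto simp: eventually_at_top_linorder)
  then show ?thesis
    using momL_measure_abs_ge_le[OF _ assms(1,2)] by (intro that) (auto intro: le_less_trans)
qed

lemma momL_tight:
  assumes "\<And>n. \<sigma> n \<in> momL eps B" "0 \<le> B" "0 \<le> eps"
  shows "tight \<sigma>"
  unfolding tight_def
proof (intro conjI allI impI)
  show "real_distribution (\<sigma> n)" for n
    using momL_memD(1)[OF assms(1)] .
  fix e :: real assume "0 < e"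
  then obtain R where R: "0 < R" "\<And>\<eta>. \<eta> \<in> momL eps B \<Longrightarrow> measure \<eta> {x. R \<le> \<bar>x\<bar>} < e"
    using momL_uniform_tail[OF assms(2,3)] by blast
  have "1 - e < measure (\<sigma> n) {- R<..R}" for n
  proof -
    interpret real_distribution "\<sigma> n"
      using momL_memD(1)[OF assms(1)] .
    have "{x. R \<le> \<bar>x\<bar>} \<in> sets (\<sigma> n)"
      by measurable
    then have "1 - measure (\<sigma> n) {x. R \<le> \<bar>x\<bar>} = measure (\<sigma> n) (space (\<sigma> n) - {x. R \<le> \<bar>x\<bar>})"
      using prob_compl by simp
    also have "\<dots> \<le> measure (\<sigma> n) {- R<..R}"
      by (intro finite_measure_mono) auto
    finally show ?thesis
      using R(2)[OF assms(1)[of n]] by linarith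
  qed
  then show "\<exists>a b. a < b \<and> (\<forall>n. 1 - e < measure (\<sigma> n) {a<..b})"
    using R(1) by (intro exI[of _ "-R"] exI[of _ R]) auto
qed

lemma nn_integral_weak_conv_le_liminf:
  fixes f :: "real \<Rightarrow> real"
  assumes "\<And>n. real_distribution (M_seq n)" "real_distribution M" "weak_conv_m M_seq M"
    and "\<And>x. isCont f x"
  shows "(\<integral>\<^sup>+x. ennreal (f x) \<partial>M) \<le> liminf (\<lambda>n. \<integral>\<^sup>+x. ennreal (f x) \<partial>M_seq n)"
proof -
  obtain \<Omega> :: "real measure" and Y_seq Y where
    "prob_space \<Omega>" and Y_seq: "\<And>n. Y_seq n \<in> borel_measurable \<Omega>"
    and distr_Y_seq: "\<And>n. distr \<Omega> borel (Y_seq n) = M_seq n"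
    and Y: "Y \<in> measurable \<Omega> lborel" and distr_Y: "distr \<Omega> borel Y = M"
    and Y_seq_lim: "\<And>x. x \<in> space \<Omega> \<Longrightarrow> (\<lambda>n. Y_seq n x) \<longlonglongrightarrow> Y x"
    using Skorohod[OF assms(1-3)] by blast
  have Y_borel: "Y \<in> borel_measurable \<Omega>"
    using Y by (simp add: measurable_cong_sets[OF refl sets_lborel])
  have f_borel [measurable]: "f \<in> borel_measurable borel"
    using assms(4) by (intro borel_measurable_continuous_onI continuous_at_imp_continuous_on) auto
  have "(\<integral>\<^sup>+x. ennreal (f x) \<partial>M) = (\<integral>\<^sup>+\<omega>. ennreal (f (Y \<omega>)) \<partial>\<Omega>)"
    unfolding distr_Y[symmetric] by (rule nn_integral_distr[OF Y_borel]) simp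
  also have "\<dots> = (\<integral>\<^sup>+\<omega>. liminf (\<lambda>n. ennreal (f (Y_seq n \<omega>))) \<partial>\<Omega>)"
  proof (rule nn_integral_cong)
    fix \<omega> assume "\<omega> \<in> space \<Omega>"
    then have "(\<lambda>n. ennreal (f (Y_seq n \<omega>))) \<longlonglongrightarrow> ennreal (f (Y \<omega>))"
      using Y_seq_lim assms(4) by (intro tendsto_ennrealI isCont_tendsto_compose[of _ f])
    then show "ennreal (f (Y \<omega>)) = liminf (\<lambda>n. ennreal (f (Y_seq n \<omega>)))"
      by (simp add: lim_imp_Liminf)
  qed
  also have "\<dots> \<le> liminf (\<lambda>n. \<integral>\<^sup>+\<omega>. ennreal (f (Y_seq n \<omega>)) \<partial>\<Omega>)"
    using Y_seq by (intro nn_integral_liminf) simp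
  also have "\<dots> = liminf (\<lambda>n. \<integral>\<^sup>+x. ennreal (f x) \<partial>M_seq n)"
    unfolding distr_Y_seq[symmetric] using Y_seq by (simp add: nn_integral_distr)
  finally show ?thesis .
qed

lemma momL_weak_conv_limit:
  assumes "\<And>n. \<sigma> n \<in> momL eps B" "real_distribution \<mu>" "weak_conv_m \<sigma> \<mu>" "0 \<le> eps"
  shows "\<mu> \<in> momL eps B"
proof -
  have "isCont (\<lambda>x. \<bar>x\<bar> powr (1 + eps)) x" for x :: real
    unfolding isCont_def using assms(4)
    by (intro tendsto_powr') (auto intro!: tendsto_intros)
  then have "(\<integral>\<^sup>+x. ennreal (\<bar>x\<bar> powr (1 + eps)) \<partial>\<mu>)
      \<le> liminf (\<lambda>n. \<integral>\<^sup>+x. ennreal (\<bar>x\<bar> powr (1 + eps)) \<partial>\<sigma> n)"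
    using momL_memD(1)[OF assms(1)] assms(2,3) by (intro nn_integral_weak_conv_le_liminf)
  also have "\<dots> \<le> ennreal B"
  proof (intro Liminf_le always_eventually allI)
    show "(\<integral>\<^sup>+x. ennreal (\<bar>x\<bar> powr (1 + eps)) \<partial>\<sigma> n) \<le> ennreal B" for n
      using assms(1)[of n] by (simp add: momL_def)
  qed simp
  finally show ?thesis
    using assms(2) unfolding momL_def by simp
qed

section \<open>Conditional value at risk\<close>

lemma Fdist_eq_cdf: "Fdist = cdf"
  by (simp add: Fdist_def cdf_def fun_eq_iff)

lemma
  assumes "real_distribution M" "0 < p" "p < 1"
  shows xq_le_iff: "xq p M \<le> z \<longleftrightarrow> p \<le> cdf M z"
    and cdf_xq_ge: "p \<le> cdf M (xq p M)"
proof -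
  interpret real_distribution M by fact
  define S where "S = {z. p \<le> cdf M z}"
  have "\<forall>\<^sub>F z in at_top. p < cdf M z"
    using cdf_lim_at_top_prob assms(3) by (rule order_tendstoD)
  then have "S \<noteq> {}"
    unfolding S_def eventually_at_top_linorder
    by (metis empty_Collect_eq less_eq_real_def order_refl)
  have "\<forall>\<^sub>F z in at_bot. cdf M z < p"
    using cdf_lim_at_bot assms(2) by (rule order_tendstoD)
  then obtain b where b: "\<And>z. z \<le> b \<Longrightarrow> cdf M z < p"
    unfolding eventually_at_bot_linorder by blast
  have "bdd_below S"
    unfolding S_def bdd_below_def using b
    by (metis linorder_not_le mem_Collect_eq not_less_iff_gr_or_eq)
  define m where "m = Inf S"
  have low: "m \<le> z" if "p \<le> cdf M z" for z
    unfolding m_def using \<open>bdd_below S\<close> that by (intro cInf_lower) (simp_all add: S_def)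
  have up: "p \<le> cdf M z" if "m < z" for z
  proof -
    obtain s where "s \<in> S" "s < z"
      using cInf_less_iff[OF \<open>S \<noteq> {}\<close> \<open>bdd_below S\<close>] \<open>m < z\<close> unfolding m_def by blast
    then show ?thesis
      unfolding S_def using cdf_nondecreasing[of s z] by simp
  qed
  have pm: "p \<le> cdf M m"
    using cdf_is_right_cont[of m]
    by (intro tendsto_lowerbound[of "cdf M" "cdf M m" "at_right m"])
       (auto simp: continuous_within intro: eventually_mono[OF eventually_at_right_less] up)
  have xq: "xq p M = m"
    unfolding xq_def Fdist_eq_cdf by (rule Least_equality[of "\<lambda>z. p \<le> cdf M z", OF pm low])
  show cdf_xq_ge: "p \<le> cdf M (xq p M)"
    using pm xq by simp
  show "xq p M \<le> z \<longleftrightarrow> p \<le> cdf M z"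
    using cdf_xq_ge cdf_nondecreasing[of "xq p M" z] low xq by auto
qed

lemma measure_lessThan_xq_le:
  assumes "real_distribution M" "0 < p" "p < 1"
  shows "measure M {..<xq p M} \<le> p"
proof -
  interpret real_distribution M by fact
  show ?thesis
  proof (rule tendsto_upperbound[OF cdf_at_left])
    show "\<forall>\<^sub>F y in at_left (xq p M). cdf M y \<le> p"
    proof (rule eventually_mono[OF eventually_at_left_real[of "xq p M - 1" "xq p M"]])
      fix y assume "y \<in> {xq p M - 1<..<xq p M}"
      then show "cdf M y \<le> p"
        using xq_le_iff[OF assms, of y] by auto
    qed simp
  qed simp
qed

lemma momL_xq_bounded:
  assumes "0 \<le> B" "0 \<le> eps" "0 < p" "p < 1"
  obtains R where "\<And>\<eta>. \<eta> \<in> momL eps B \<Longrightarrow> \<bar>xq p \<eta>\<bar> \<le> R"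
proof -
  obtain R where R: "0 < R" "\<And>\<eta>. \<eta> \<in> momL eps B \<Longrightarrow> measure \<eta> {x. R \<le> \<bar>x\<bar>} < min p (1 - p)"
    using momL_uniform_tail[OF assms(1,2), of "min p (1 - p)"] assms(3,4) by auto
  have "\<bar>xq p \<eta>\<bar> \<le> R" if \<eta>: "\<eta> \<in> momL eps B" for \<eta>
  proof -
    interpret real_distribution \<eta>
      using momL_memD(1)[OF \<eta>] .
    have tail: "{x. R \<le> \<bar>x\<bar>} \<in> sets \<eta>"
      by measurable
    have "1 - measure \<eta> {x. R \<le> \<bar>x\<bar>} = measure \<eta> (space \<eta> - {x. R \<le> \<bar>x\<bar>})"
      using prob_compl[OF tail] by simp
    also have "\<dots> \<le> cdf \<eta> R"
      unfolding cdf_def by (intro finite_measure_mono) auto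
    finally have "xq p \<eta> \<le> R"
      using R(2)[OF \<eta>] xq_le_iff[OF real_distribution_axioms assms(3,4)] by auto
    moreover have "\<not> xq p \<eta> < - R"
    proof
      assume "xq p \<eta> < - R"
      then have "cdf \<eta> (xq p \<eta>) \<le> measure \<eta> {x. R \<le> \<bar>x\<bar>}"
        unfolding cdf_def using tail by (intro finite_measure_mono) auto
      then show False
        using R(2)[OF \<eta>] cdf_xq_ge[OF real_distribution_axioms assms(3,4)] by simp
    qed
    ultimately show ?thesis
      by simp
  qed
  then show ?thesis
    by (rule that)
qed

definition cvar_objective :: "real \<Rightarrow> real measure \<Rightarrow> real \<Rightarrow> real" where
  "cvar_objective p M z = z + (\<integral>y. max (y - z) 0 \<partial>M) / (1 - p)"

lemma integrable_max_diff_0: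
  assumes "real_distribution M" "integrable M (\<lambda>x. x)"
  shows "integrable M (\<lambda>y. max (y - z) 0)"
proof -
  interpret real_distribution M by fact
  have "integrable M (\<lambda>y. \<bar>z\<bar> + \<bar>y\<bar>)"
    using assms(2) by simp
  then show ?thesis
    by (rule Bochner_Integration.integrable_bound) auto
qed

lemma cvar_eq_cvar_objective_xq:
  assumes "real_distribution M" "integrable M (\<lambda>x. x)" "p \<noteq> 1"
  shows "cvar p M = cvar_objective p M (xq p M)"
proof -
  interpret real_distribution M by fact
  define x where "x = xq p M"
  have "(LINT y:{x<..}|M. y) = (\<integral>y. max (y - x) 0 + x * indicator {x<..} y \<partial>M)"
    unfolding set_lebesgue_integral_def
    by (intro Bochner_Integration.integral_cong) (auto simp: indicator_def)
  also have "\<dots> = (\<integral>y. max (y - x) 0 \<partial>M) + x * measure M {x<..}"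
    using integrable_max_diff_0[OF assms(1,2)] by (simp add: less_top[symmetric])
  also have "measure M {x<..} = 1 - cdf M x"
    using prob_compl[of "{..x}"] by (simp add: cdf_def Compl_eq_Diff_UNIV[symmetric] Compl_atMost)
  finally have "(LINT y:{x<..}|M. y) = (\<integral>y. max (y - x) 0 \<partial>M) + x * (1 - cdf M x)" .
  then show ?thesis
    using assms(3) unfolding cvar_def cvar_objective_def Fdist_eq_cdf x_def[symmetric]
    by (simp add: divide_simps) (simp add: algebra_simps)
qed

(* z \<mapsto> E (X - z)^+ has left slope measure M {..<z} - 1 and right slope cdf M z - 1, and at the
   quantile p - 1 lies between them. *)
lemma integral_excess_xq_le:
  assumes "real_distribution M" "integrable M (\<lambda>x. x)" "0 < p" "p < 1"
  shows "(\<integral>y. max (y - xq p M) 0 \<partial>M) + (xq p M - z) * (1 - p) \<le> (\<integral>y. max (y - z) 0 \<partial>M)"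
proof -
  interpret real_distribution M by fact
  define x where "x = xq p M"
  define E where "E w = (\<integral>y. max (y - w) 0 \<partial>M)" for w
  have int: "integrable M (\<lambda>y. max (y - w) 0)" for w
    using integrable_max_diff_0[OF assms(1,2)] .
  have ind: "integrable M (indicator A :: real \<Rightarrow> real)" if "A \<in> sets borel" for A
    using that by (simp add: less_top[symmetric])
  have "E x + (x - z) * (1 - p) \<le> E z"
  proof (cases "x \<le> z")
    case True
    have "E x \<le> (\<integral>y. max (y - z) 0 + (z - x) * indicator {x<..} y \<partial>M)"
      unfolding E_def
    proof (rule integral_mono)
      show "integrable M (\<lambda>y. max (y - z) 0 + (z - x) * indicator {x<..} y)"
        using int ind by simp
    qed (use True int in \<open>auto simp: indicator_def\<close>)
    also have "\<dots> = E z + (z - x) * (1 - cdf M x)"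
      using int ind prob_compl[of "{..x}"]
      by (simp add: E_def cdf_def Compl_eq_Diff_UNIV[symmetric] Compl_atMost)
    finally show ?thesis
      using True cdf_xq_ge[OF assms(1,3,4)] mult_left_mono[of p "cdf M x" "z - x"]
      unfolding x_def by (simp add: algebra_simps)
  next
    case False
    have "E x + (x - z) * (1 - measure M {..<x})
        = (\<integral>y. max (y - x) 0 + (x - z) * indicator {x..} y \<partial>M)"
      using int ind prob_compl[of "{..<x}"]
      by (simp add: E_def Compl_eq_Diff_UNIV[symmetric] Compl_lessThan)
    also have "\<dots> \<le> E z"
      unfolding E_def
    proof (rule integral_mono)
      show "integrable M (\<lambda>y. max (y - x) 0 + (x - z) * indicator {x..} y)"
        using int ind by simp
    qed (use False int in \<open>auto simp: indicator_def\<close>)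
    finally show ?thesis
      using False measure_lessThan_xq_le[OF assms(1,3,4)]
        mult_left_mono[of "measure M {..<x}" p "x - z"]
      unfolding x_def by (simp add: algebra_simps)
  qed
  then show ?thesis
    unfolding E_def x_def .
qed

lemma cvar_objective_xq_le:
  assumes "real_distribution M" "integrable M (\<lambda>x. x)" "0 < p" "p < 1"
  shows "cvar_objective p M (xq p M) \<le> cvar_objective p M z"
proof -
  have "xq p M - z
      \<le> ((\<integral>y. max (y - z) 0 \<partial>M) - (\<integral>y. max (y - xq p M) 0 \<partial>M)) / (1 - p)"
    using integral_excess_xq_le[OF assms, of z] assms(4) by (simp add: pos_le_divide_eq)
  then show ?thesis
    unfolding cvar_objective_def by (simp add: diff_divide_distrib)
qed

lemma cvar_objective_lipschitz:
  assumes "real_distribution M" "integrable M (\<lambda>x. x)" "p < 1"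
  shows "\<bar>cvar_objective p M z - cvar_objective p M z'\<bar> \<le> (1 + 1 / (1 - p)) * \<bar>z - z'\<bar>"
proof -
  interpret real_distribution M by fact
  have int: "integrable M (\<lambda>y. max (y - w) 0)" for w
    using integrable_max_diff_0[OF assms(1,2)] .
  have "\<bar>(\<integral>y. max (y - z) 0 \<partial>M) - (\<integral>y. max (y - z') 0 \<partial>M)\<bar>
      = \<bar>\<integral>y. max (y - z) 0 - max (y - z') 0 \<partial>M\<bar>"
    using int by simp
  also have "\<dots> \<le> (\<integral>y. \<bar>max (y - z) 0 - max (y - z') 0\<bar> \<partial>M)"
    by (rule integral_abs_bound)
  also have "\<dots> \<le> (\<integral>y. \<bar>z - z'\<bar> \<partial>M)"
    using int by (intro integral_mono) auto
  finally have "\<bar>(\<integral>y. max (y - z) 0 \<partial>M) - (\<integral>y. max (y - z') 0 \<partial>M)\<bar> \<le> \<bar>z - z'\<bar>"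
    using prob_space by simp
  then have "\<bar>(\<integral>y. max (y - z) 0 \<partial>M) - (\<integral>y. max (y - z') 0 \<partial>M)\<bar> / (1 - p) \<le> \<bar>z - z'\<bar> / (1 - p)"
    using assms(3) by (simp add: divide_right_mono)
  moreover have "cvar_objective p M z - cvar_objective p M z'
      = (z - z') + ((\<integral>y. max (y - z) 0 \<partial>M) - (\<integral>y. max (y - z') 0 \<partial>M)) / (1 - p)"
    unfolding cvar_objective_def by (simp add: diff_divide_distrib)
  ultimately show ?thesis
    using assms(3) by (simp add: abs_divide distrib_right abs_triangle_ineq[THEN order_trans])
qed

lemma momL_excess_truncation_le:
  assumes "\<eta> \<in> momL eps B" "0 \<le> B" "0 < eps" "0 < N" "2 * \<bar>z\<bar> \<le> N"
  shows "\<bar>(\<integral>y. max (y - z) 0 \<partial>\<eta>) - (\<integral>y. min (max (y - z) 0) N \<partial>\<eta>)\<bar> \<le> B / (N / 2) powr eps"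
proof -
  interpret real_distribution \<eta>
    using momL_memD(1)[OF assms(1)] .
  have int: "integrable \<eta> (\<lambda>y. max (y - z) 0)"
    using integrable_max_diff_0 momL_integrable_id assms(1,3) real_distribution_axioms by simp
  have int_trunc: "integrable \<eta> (\<lambda>y. min (max (y - z) 0) N)"
    by (rule integrable_const_bound[where B = N]) (use assms(4) in auto)
  have excess: "max (y - z) 0 - min (max (y - z) 0) N \<le> \<bar>y\<bar> powr (1 + eps) / (N / 2) powr eps" for y
  proof (cases "y - z \<le> N")
    case False
    then have y: "N / 2 \<le> y"
      using assms(5) by linarith
    have "max (y - z) 0 - min (max (y - z) 0) N \<le> y"
      using False assms(5) by linarith
    also have "\<dots> = y * (N / 2) powr eps / (N / 2) powr eps"
      using assms(4) by simp
    also have "\<dots> \<le> y * y powr eps / (N / 2) powr eps"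
      using y assms(3,4) by (intro divide_right_mono mult_left_mono powr_mono2) auto
    also have "y * y powr eps = \<bar>y\<bar> powr (1 + eps)"
      using y assms(4) by (simp add: powr_add)
    finally show ?thesis .
  qed (use assms(4) in auto)
  have "(\<integral>y. max (y - z) 0 \<partial>\<eta>) - (\<integral>y. min (max (y - z) 0) N \<partial>\<eta>)
      = (\<integral>y. max (y - z) 0 - min (max (y - z) 0) N \<partial>\<eta>)"
    using int int_trunc by simp
  also have "\<dots> \<le> (\<integral>y. \<bar>y\<bar> powr (1 + eps) / (N / 2) powr eps \<partial>\<eta>)"
    using int int_trunc momL_memD(2)[OF assms(1)] excess by (intro integral_mono) auto
  also have "\<dots> = (\<integral>y. \<bar>y\<bar> powr (1 + eps) \<partial>\<eta>) / (N / 2) powr eps"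
    by simp
  also have "\<dots> \<le> B / (N / 2) powr eps"
    using momL_moment_le[OF assms(1,2)] by (intro divide_right_mono) auto
  finally show ?thesis
    using integral_mono[OF int_trunc int] by (simp add: abs_le_iff)
qed

lemma momL_weak_conv_excess_integral:
  assumes "\<And>n. \<sigma> n \<in> momL eps B" "\<mu> \<in> momL eps B" "weak_conv_m \<sigma> \<mu>" "0 \<le> B" "0 < eps"
  shows "(\<lambda>n. \<integral>y. max (y - z) 0 \<partial>\<sigma> n) \<longlonglongrightarrow> (\<integral>y. max (y - z) 0 \<partial>\<mu>)"
proof (rule LIMSEQ_I)
  fix r :: real assume "0 < r"
  have "((\<lambda>N. B / (N / 2) powr eps) \<longlongrightarrow> 0) at_top"
    using assms(5) by real_asymp
  moreover have "0 < r / 3"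
    using \<open>0 < r\<close> by simp
  ultimately have "\<forall>\<^sub>F N in at_top. B / (N / 2) powr eps < r / 3 \<and> 2 * \<bar>z\<bar> \<le> N \<and> 0 < N"
    by (intro eventually_conj order_tendstoD(2) eventually_ge_at_top eventually_gt_at_top)
  then obtain N where N: "B / (N / 2) powr eps < r / 3" "2 * \<bar>z\<bar> \<le> N" "0 < N"
    by (auto simp: eventually_at_top_linorder)
  define T where "T M = (\<integral>y. min (max (y - z) 0) N \<partial>M)" for M
  have "(\<lambda>n. T (\<sigma> n)) \<longlonglongrightarrow> T \<mu>"
    unfolding T_def using N(3) momL_memD(1) assms(1-3)
    by (intro weak_conv_imp_integral_bdd_continuous_conv[where B = N])
       (auto intro!: continuous_intros)
  then obtain n0 where n0: "\<And>n. n0 \<le> n \<Longrightarrow> \<bar>T (\<sigma> n) - T \<mu>\<bar> < r / 3"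
    using LIMSEQ_D[of _ _ "r / 3"] \<open>0 < r / 3\<close> by (metis real_norm_def)
  have "\<bar>(\<integral>y. max (y - z) 0 \<partial>\<sigma> n) - (\<integral>y. max (y - z) 0 \<partial>\<mu>)\<bar> < r" if "n0 \<le> n" for n
    using momL_excess_truncation_le[OF assms(1) assms(4,5) N(3,2), of n]
      momL_excess_truncation_le[OF assms(2) assms(4,5) N(3,2)] n0[OF that] N(1)
    unfolding T_def by linarith
  then show "\<exists>n0. \<forall>n\<ge>n0. norm ((\<integral>y. max (y - z) 0 \<partial>\<sigma> n) - (\<integral>y. max (y - z) 0 \<partial>\<mu>)) < r"
    by auto
qed

lemma momL_weak_conv_cvar_objective:
  assumes "\<And>n. \<sigma> n \<in> momL eps B" "\<mu> \<in> momL eps B" "weak_conv_m \<sigma> \<mu>" "0 \<le> B" "0 < eps"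
    and "p < 1"
  shows "(\<lambda>n. cvar_objective p (\<sigma> n) z) \<longlonglongrightarrow> cvar_objective p \<mu> z"
  unfolding cvar_objective_def using assms(6)
  by (intro tendsto_intros momL_weak_conv_excess_integral[OF assms(1-5)]) simp

lemma weak_conv_m_subseq:
  assumes "weak_conv_m M_seq M" "strict_mono r"
  shows "weak_conv_m (M_seq \<circ> r) M"
  using assms LIMSEQ_subseq_LIMSEQ[unfolded comp_def]
  unfolding weak_conv_m_def weak_conv_def comp_def by blast

lemma momL_weak_conv_cvar_ge:
  assumes "\<And>n. \<sigma> n \<in> momL eps B" "\<mu> \<in> momL eps B" "weak_conv_m \<sigma> \<mu>" "0 \<le> B" "0 < eps"
    and "0 < p" "p < 1" "\<And>n. v \<le> cvar p (\<sigma> n)"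
  shows "v \<le> cvar p \<mu>"
proof -
  have bound: "v \<le> cvar_objective p (\<sigma> n) (xq p \<mu>)" for n
    using assms(8)[of n] cvar_eq_cvar_objective_xq cvar_objective_xq_le
      momL_memD(1)[OF assms(1)] momL_integrable_id[OF assms(1)] assms(5-7)
    by (metis less_eq_real_def order_trans less_irrefl)
  have "v \<le> cvar_objective p \<mu> (xq p \<mu>)"
    by (rule LIMSEQ_le_const[OF momL_weak_conv_cvar_objective[OF assms(1-5,7)]]) (use bound in auto)
  also have "\<dots> = cvar p \<mu>"
    using cvar_eq_cvar_objective_xq momL_memD(1)[OF assms(2)] momL_integrable_id[OF assms(2)]
      assms(5,7) by simp
  finally show ?thesis .
qed

lemma momL_weak_conv_cvar_le:
  assumes "\<And>n. \<sigma> n \<in> momL eps B" "\<mu> \<in> momL eps B" "weak_conv_m \<sigma> \<mu>" "0 \<le> B" "0 < eps"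
    and "0 < p" "p < 1" "\<And>n. cvar p (\<sigma> n) \<le> v"
  shows "cvar p \<mu> \<le> v"
proof -
  have distr: "real_distribution \<eta>" and int: "integrable \<eta> (\<lambda>x. x)" if "\<eta> \<in> momL eps B" for \<eta>
    using momL_memD(1) momL_integrable_id assms(5) that by auto
  define z where "z n = xq p (\<sigma> n)" for n
  obtain R where "\<And>\<eta>. \<eta> \<in> momL eps B \<Longrightarrow> \<bar>xq p \<eta>\<bar> \<le> R"
    using momL_xq_bounded[OF assms(4) less_imp_le[OF assms(5)] assms(6,7)] by blast
  then have "bounded (range z)"
    unfolding bounded_iff z_def using assms(1) by auto
  then obtain r z\<^sub>0 where r: "strict_mono r" and z_lim: "(z \<circ> r) \<longlonglongrightarrow> z\<^sub>0"
    using bounded_imp_convergent_subsequence by blast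
  have "(\<lambda>n. cvar_objective p (\<sigma> (r n)) (z (r n)) - cvar_objective p (\<sigma> (r n)) z\<^sub>0) \<longlonglongrightarrow> 0"
  proof (rule Lim_null_comparison)
    show "\<forall>\<^sub>F n in sequentially.
        norm (cvar_objective p (\<sigma> (r n)) (z (r n)) - cvar_objective p (\<sigma> (r n)) z\<^sub>0)
          \<le> (1 + 1 / (1 - p)) * \<bar>z (r n) - z\<^sub>0\<bar>"
      using cvar_objective_lipschitz[OF distr int] assms(1,7) by (simp add: always_eventually)
    have "(\<lambda>n. \<bar>z (r n) - z\<^sub>0\<bar>) \<longlonglongrightarrow> 0"
      using z_lim by (simp add: o_def LIM_zero tendsto_rabs_zero)
    then show "(\<lambda>n. (1 + 1 / (1 - p)) * \<bar>z (r n) - z\<^sub>0\<bar>) \<longlonglongrightarrow> 0"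
      by (rule tendsto_mult_right_zero)
  qed
  moreover have "(\<lambda>n. cvar_objective p (\<sigma> (r n)) z\<^sub>0) \<longlonglongrightarrow> cvar_objective p \<mu> z\<^sub>0"
    using momL_weak_conv_cvar_objective[of "\<sigma> \<circ> r", OF _ assms(2) weak_conv_m_subseq[OF assms(3) r]
        assms(4,5,7)] assms(1) by simp
  ultimately have "(\<lambda>n. cvar_objective p (\<sigma> (r n)) (z (r n))) \<longlonglongrightarrow> cvar_objective p \<mu> z\<^sub>0"
    by (rule Lim_transform[rotated])
  moreover have "cvar_objective p (\<sigma> (r n)) (z (r n)) \<le> v" for n
    using assms(8)[of "r n"] cvar_eq_cvar_objective_xq[OF distr int] assms(1,7)
    unfolding z_def by simp
  ultimately have "cvar_objective p \<mu> z\<^sub>0 \<le> v"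
    by (intro LIMSEQ_le_const2) auto
  moreover have "cvar p \<mu> \<le> cvar_objective p \<mu> z\<^sub>0"
    using cvar_eq_cvar_objective_xq[OF distr int] cvar_objective_xq_le[OF distr int] assms(2,6,7)
    by simp
  ultimately show ?thesis
    by simp
qed

lemma compactin_weakconv_topology_momL_Collect:
  assumes "0 \<le> B" "0 \<le> eps"
    and closed: "\<And>\<sigma> \<mu>. (\<And>n. \<sigma> n \<in> momL eps B) \<Longrightarrow> \<mu> \<in> momL eps B \<Longrightarrow> weak_conv_m \<sigma> \<mu> \<Longrightarrow>
      (\<And>n. P (\<sigma> n)) \<Longrightarrow> P \<mu>"
  shows "compactin weakconv_topology {\<eta> \<in> momL eps B. P \<eta>}"
proof (rule compactin_weakconv_topology_sequentially)
  show "{\<eta> \<in> momL eps B. P \<eta>} \<subseteq> {M. real_distribution M}"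
    using momL_memD(1) by blast
  fix \<sigma> :: "nat \<Rightarrow> real measure" assume \<sigma>: "\<And>n. \<sigma> n \<in> {\<eta> \<in> momL eps B. P \<eta>}"
  then have "tight \<sigma>"
    using momL_tight[of \<sigma> eps B] assms(1,2) by simp
  moreover have "strict_mono (id :: nat \<Rightarrow> nat)"
    by (simp add: strict_mono_def)
  ultimately obtain r M where r: "strict_mono r" and M: "real_distribution M"
    and conv: "weak_conv_m (\<sigma> \<circ> r) M"
    using tight_imp_convergent_subsubsequence by (metis comp_id)
  have "M \<in> momL eps B"
    using momL_weak_conv_limit[of "\<sigma> \<circ> r", OF _ M conv assms(2)] \<sigma> by simp
  moreover have "P M"
    using closed[of "\<sigma> \<circ> r" M] \<sigma> conv \<open>M \<in> momL eps B\<close> by simp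
  ultimately show "\<exists>M r. M \<in> {\<eta> \<in> momL eps B. P \<eta>} \<and> strict_mono r \<and> weak_conv_m (\<sigma> \<circ> r) M"
    using r conv by blast
qed

theorem lemma7:
  fixes p eps B v :: real
  assumes "0 < p" "p < 1" "eps > 0" "B > 0"
  shows "compactin weakconv_topology {\<eta> \<in> momL eps B. cvar p \<eta> \<le> v}
       \<and> compactin weakconv_topology {\<eta> \<in> momL eps B. cvar p \<eta> \<ge> v}"
proof
  have B: "0 \<le> B" and eps: "0 \<le> eps"
    using assms by simp_all
  show "compactin weakconv_topology {\<eta> \<in> momL eps B. cvar p \<eta> \<le> v}"
  proof (rule compactin_weakconv_topology_momL_Collect[OF B eps])
    fix \<sigma> \<mu> assume "\<And>n. \<sigma> n \<in> momL eps B" "\<mu> \<in> momL eps B" "weak_conv_m \<sigma> \<mu>"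
      and "\<And>n. cvar p (\<sigma> n) \<le> v"
    with assms show "cvar p \<mu> \<le> v"
      by (intro momL_weak_conv_cvar_le[of \<sigma> eps B \<mu>]) simp_all
  qed
  show "compactin weakconv_topology {\<eta> \<in> momL eps B. cvar p \<eta> \<ge> v}"
  proof (rule compactin_weakconv_topology_momL_Collect[OF B eps])
    fix \<sigma> \<mu> assume "\<And>n. \<sigma> n \<in> momL eps B" "\<mu> \<in> momL eps B" "weak_conv_m \<sigma> \<mu>"
      and "\<And>n. v \<le> cvar p (\<sigma> n)"
    with assms show "v \<le> cvar p \<mu>"
      by (intro momL_weak_conv_cvar_ge[of \<sigma> eps B \<mu>]) simp_all
  qed
qed

end
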